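(* Let $n,k,t$ be positive integers with $k<n$ and $q$ a prime power. Let $\Omega$ be an $(nt-kt-2)$-dimensional subspace of $\mathrm{PG}(nt-1,q)$, let $\Gamma$ be a plane skew from $\Omega$, and let $\bar{B}$ be a minimal blocking set (with respect to lines) of $\Gamma$ such that every point of $\bar{B}$ lies on at least $t$ tangent lines to $\bar{B}$ in $\Gamma$. Let $\Pi=\langle\Omega,\Gamma\rangle$ and let $K$ be the cone in $\Pi$ with vertex $\Omega$ and base $\bar{B}$. Then for every point $P$ of $K$ there exist a subspace $\mu$ of $\Pi$ of codimension $2$ in $\Pi$ and at least $t$ hyperplanes of $\Pi$ through $P$, each of which meets $K$ only in points of $\mu$.
   Context: The cone with vertex a subspace $\Omega$ and base a point set $\bar{B}$ contained in a subspace skew from $\Omega$ is $\bigcup_{P\in\bar B}\langle P,\Omega\rangle$. A blocking set of a plane is a point set meeting every line; it is minimal if no proper subset is a blocking set. A tangent line to $\bar B$ is a line meeting $\bar B$ in exactly one point. *)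

theory Defs
  imports "HOL-Analysis.Analysis" "HOL-Computational_Algebra.Primes"
begin

text \<open>Projective geometry PG(N-1,q) modelled as the lattice of vector subspaces of
  'a^'n, where 'a is a finite field with q elements and CARD('n) = N.
  A projective subspace of projective dimension d is a vector subspace of
  (vector) dimension d+1; points are 1-dimensional subspaces.\<close>

type_synonym ('a,'n) psubspace = "('a^'n) set"

definition psub :: "('a::field,'n::finite) psubspace \<Rightarrow> bool" where
  "psub S \<longleftrightarrow> vec.subspace S"

definition pdim :: "('a::field,'n::finite) psubspace \<Rightarrow> int" where
  "pdim S = int (vec.dim S) - 1"

definition ppoint :: "('a::field,'n::finite) psubspace \<Rightarrow> bool" where
  "ppoint P \<longleftrightarrow> psub P \<and> pdim P = 0"

definition pline :: "('a::field,'n::finite) psubspace \<Rightarrow> bool" where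
  "pline L \<longleftrightarrow> psub L \<and> pdim L = 1"

definition pplane :: "('a::field,'n::finite) psubspace \<Rightarrow> bool" where
  "pplane L \<longleftrightarrow> psub L \<and> pdim L = 2"

definition pjoin :: "('a::field,'n::finite) psubspace \<Rightarrow> ('a,'n) psubspace \<Rightarrow> ('a,'n) psubspace" where
  "pjoin A B = vec.span (A \<union> B)"

definition skew :: "('a::field,'n::finite) psubspace \<Rightarrow> ('a,'n) psubspace \<Rightarrow> bool" where
  "skew A B \<longleftrightarrow> A \<inter> B = {0}"

definition blocking_set :: "('a::field,'n::finite) psubspace \<Rightarrow> ('a,'n) psubspace set \<Rightarrow> bool" where
  "blocking_set \<Gamma> B \<longleftrightarrow> (\<forall>P\<in>B. ppoint P \<and> P \<subseteq> \<Gamma>) \<and>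
     (\<forall>L. pline L \<and> L \<subseteq> \<Gamma> \<longrightarrow> (\<exists>P\<in>B. P \<subseteq> L))"

definition minimal_blocking_set :: "('a::field,'n::finite) psubspace \<Rightarrow> ('a,'n) psubspace set \<Rightarrow> bool" where
  "minimal_blocking_set \<Gamma> B \<longleftrightarrow> blocking_set \<Gamma> B \<and> (\<forall>B'. B' \<subset> B \<longrightarrow> \<not> blocking_set \<Gamma> B')"

definition tangent_lines_at :: "('a::field,'n::finite) psubspace \<Rightarrow> ('a,'n) psubspace set \<Rightarrow> ('a,'n) psubspace \<Rightarrow> ('a,'n) psubspace set" where
  "tangent_lines_at \<Gamma> B P = {L. pline L \<and> L \<subseteq> \<Gamma> \<and> {Q\<in>B. Q \<subseteq> L} = {P}}"

definition cone :: "('a::field,'n::finite) psubspace \<Rightarrow> ('a,'n) psubspace set \<Rightarrow> ('a,'n) psubspace set" where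
  "cone \<Omega> B = {Q. ppoint Q \<and> (\<exists>P\<in>B. Q \<subseteq> pjoin P \<Omega>)}"

end

theory Submission
  imports Defs
begin

text \<open>Let \<open>R \<in> B\<close> be the base point with \<open>P \<subseteq> \<langle>R,\<Omega>\<rangle>\<close> and take \<open>\<mu> = \<langle>R,\<Omega>\<rangle>\<close>. Since \<open>\<Omega>\<close> is
  skew to \<open>\<Gamma>\<close>, projecting from \<open>\<Omega>\<close> onto \<open>\<Gamma>\<close> is well defined: \<open>\<langle>A,\<Omega>\<rangle> \<inter> \<Gamma> = A\<close> and
  \<open>\<langle>A,\<Omega>\<rangle> \<inter> \<langle>C,\<Omega>\<rangle> = \<langle>A \<inter> C,\<Omega>\<rangle>\<close> for subspaces \<open>A, C\<close> of \<open>\<Gamma>\<close>. Hence the hyperplanes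
  \<open>\<langle>L,\<Omega>\<rangle>\<close>, for \<open>L\<close> a tangent line at \<open>R\<close>, are pairwise distinct, and a cone point in
  \<open>\<langle>L,\<Omega>\<rangle>\<close> projects into \<open>L \<inter> B = {R}\<close>, so it lies in \<open>\<mu>\<close>.\<close>

lemma span_Un_subspaces:
  assumes "vec.subspace A" "vec.subspace B"
  shows "vec.span (A \<union> B) = {a + b |a b. a \<in> A \<and> b \<in> B}"
proof -
  have "vec.span A = A" "vec.span B = B" using assms by (simp_all add: vec.span_eq_iff)
  then show ?thesis using vec.span_Un[of A B] by (simp only:)
qed

lemma pjoin_Int_pjoin_skew:
  fixes A C W G :: "('a::field, 'n::finite) psubspace"
  assumes "psub A" "psub C" "psub W" "psub G" "A \<subseteq> G" "C \<subseteq> G" "skew W G"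
  shows "pjoin A W \<inter> pjoin C W = pjoin (A \<inter> C) W"
proof
  show "pjoin (A \<inter> C) W \<subseteq> pjoin A W \<inter> pjoin C W"
    unfolding pjoin_def by (intro Int_greatest vec.span_mono) auto
next
  have sub: "vec.subspace A" "vec.subspace C" "vec.subspace W" "vec.subspace G"
    using assms by (simp_all add: psub_def)
  show "pjoin A W \<inter> pjoin C W \<subseteq> pjoin (A \<inter> C) W"
  proof
    fix x assume "x \<in> pjoin A W \<inter> pjoin C W"
    then obtain a w c w' where x: "x = a + w" "x = c + w'"
      and mem: "a \<in> A" "w \<in> W" "c \<in> C" "w' \<in> W"
      unfolding pjoin_def span_Un_subspaces[OF sub(1,3)] span_Un_subspaces[OF sub(2,3)]
      by blast
    have "a - c = w' - w" using x by (simp add: algebra_simps)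
    moreover have "a - c \<in> G" using mem assms(5,6) vec.subspace_diff[OF sub(4)] by blast
    moreover have "w' - w \<in> W" using mem vec.subspace_diff[OF sub(3)] by blast
    ultimately have "a - c \<in> W \<inter> G" by simp
    then have "a = c" using assms(7) unfolding skew_def by simp
    with x mem show "x \<in> pjoin (A \<inter> C) W"
      unfolding pjoin_def span_Un_subspaces[OF vec.subspace_inter[OF sub(1,2)] sub(3)] by blast
  qed
qed

lemma pjoin_Int_skew:
  fixes A W G :: "('a::field, 'n::finite) psubspace"
  assumes "psub A" "psub W" "psub G" "A \<subseteq> G" "skew W G"
  shows "pjoin A W \<inter> G = A"
proof
  show "A \<subseteq> pjoin A W \<inter> G" using assms(4) unfolding pjoin_def by (auto intro: vec.span_base)
next
  show "pjoin A W \<inter> G \<subseteq> A"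
  proof
    fix x assume x: "x \<in> pjoin A W \<inter> G"
    have sub: "vec.subspace A" "vec.subspace W" "vec.subspace G"
      using assms by (simp_all add: psub_def)
    from x obtain a w where "x = a + w" "a \<in> A" "w \<in> W"
      unfolding pjoin_def span_Un_subspaces[OF sub(1,2)] by blast
    moreover have "x - a \<in> G" using x \<open>a \<in> A\<close> assms(4) vec.subspace_diff[OF sub(3)] by blast
    ultimately have "w \<in> W \<inter> G" by simp
    then have "w = 0" using assms(5) unfolding skew_def by simp
    then show "x \<in> A" using \<open>x = a + w\<close> \<open>a \<in> A\<close> by simp
  qed
qed

lemma pdim_pjoin_skew:
  fixes A B :: "('a::field, 'n::finite) psubspace"
  assumes "psub A" "psub B" "skew A B"
  shows "pdim (pjoin A B) = pdim A + pdim B + 1"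
proof -
  have sub: "vec.subspace A" "vec.subspace B" using assms by (simp_all add: psub_def)
  have "vec.dim (A \<inter> B) = 0" using assms(3) by (simp add: skew_def)
  with vec.dim_sums_Int[OF sub] have "vec.dim (pjoin A B) = vec.dim A + vec.dim B"
    unfolding pjoin_def span_Un_subspaces[OF sub] by linarith
  then show ?thesis by (simp add: pdim_def)
qed

lemma ppoint_subset_or_skew:
  fixes R L :: "('a::field, 'n::finite) psubspace"
  assumes "ppoint R" "psub L"
  shows "R \<subseteq> L \<or> R \<inter> L = {0}"
proof (cases "R \<inter> L \<subseteq> {0}")
  case True
  have "0 \<in> R \<inter> L" using assms by (simp add: ppoint_def psub_def vec.subspace_0)
  with True show ?thesis by blast
next
  case False
  have sub: "vec.subspace R" "vec.subspace (R \<inter> L)"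
    using assms by (simp_all add: ppoint_def psub_def vec.subspace_inter)
  have "vec.dim (R \<inter> L) \<noteq> 0" using False by simp
  moreover have "vec.dim R = 1" using assms(1) by (simp add: ppoint_def pdim_def)
  ultimately have "vec.dim R \<le> vec.dim (R \<inter> L)" by linarith
  then have "R \<inter> L = R" using vec.subspace_dim_equal[OF sub(2,1)] by blast
  then show ?thesis by blast
qed

lemma inj_on_pjoin_skew:
  fixes \<Omega> \<Gamma> :: "('a::field, 'n::finite) psubspace"
  assumes "psub \<Omega>" "psub \<Gamma>" "skew \<Omega> \<Gamma>"
  shows "inj_on (\<lambda>L. pjoin L \<Omega>) {L. psub L \<and> L \<subseteq> \<Gamma>}"
proof (rule inj_onI)
  fix L L' assume L: "L \<in> {L. psub L \<and> L \<subseteq> \<Gamma>}" and L': "L' \<in> {L. psub L \<and> L \<subseteq> \<Gamma>}"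
    and "pjoin L \<Omega> = pjoin L' \<Omega>"
  then have "pjoin L \<Omega> \<inter> \<Gamma> = pjoin L' \<Omega> \<inter> \<Gamma>" by (simp only:)
  with L L' show "L = L'" by (simp add: pjoin_Int_skew[OF _ assms(1,2) _ assms(3)])
qed

lemma tangent_lines_atD:
  assumes "L \<in> tangent_lines_at \<Gamma> B R"
  shows "pline L" "L \<subseteq> \<Gamma>" "R \<in> B" "R \<subseteq> L" "\<And>X. X \<in> B \<Longrightarrow> X \<subseteq> L \<Longrightarrow> X = R"
proof -
  have L: "pline L \<and> L \<subseteq> \<Gamma> \<and> {X\<in>B. X \<subseteq> L} = {R}"
    using assms unfolding tangent_lines_at_def by (rule CollectD)
  then show "pline L" "L \<subseteq> \<Gamma>" by simp_all
  from L have eq: "{X\<in>B. X \<subseteq> L} = {R}" by simp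
  have "R \<in> {X\<in>B. X \<subseteq> L}" unfolding eq by simp
  then show "R \<in> B" "R \<subseteq> L" by simp_all
  fix X assume "X \<in> B" "X \<subseteq> L"
  then have "X \<in> {X\<in>B. X \<subseteq> L}" by simp
  then show "X = R" unfolding eq by simp
qed

lemma cone_Int_pjoin_tangent:
  fixes \<Omega> \<Gamma> :: "('a::field, 'n::finite) psubspace"
  assumes "psub \<Omega>" "psub \<Gamma>" "skew \<Omega> \<Gamma>" "\<forall>X\<in>B. ppoint X \<and> X \<subseteq> \<Gamma>"
    and "L \<in> tangent_lines_at \<Gamma> B R" "Q \<in> cone \<Omega> B" "Q \<subseteq> pjoin L \<Omega>"
  shows "Q \<subseteq> pjoin R \<Omega>"
proof -
  obtain R' where R': "R' \<in> B" "Q \<subseteq> pjoin R' \<Omega>" using assms(6) by (auto simp: cone_def)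
  note L = tangent_lines_atD[OF assms(5)]
  have "psub L" using L(1) by (simp add: pline_def)
  have "ppoint R'" "R' \<subseteq> \<Gamma>" using assms(4) R'(1) by auto
  then have "psub R'" by (simp add: ppoint_def)
  have "Q \<subseteq> pjoin R' \<Omega> \<inter> pjoin L \<Omega>" using R'(2) assms(7) by (rule Int_greatest)
  also have "\<dots> = pjoin (R' \<inter> L) \<Omega>"
    using pjoin_Int_pjoin_skew[OF \<open>psub R'\<close> \<open>psub L\<close> assms(1,2) \<open>R' \<subseteq> \<Gamma>\<close> L(2) assms(3)] .
  also have "\<dots> \<subseteq> pjoin R \<Omega>"
  proof (cases "R' \<subseteq> L")
    case True
    with R'(1) have "R' = R" by (rule L(5))
    then show ?thesis unfolding pjoin_def by (intro vec.span_mono) blast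
  next
    case False
    have "0 \<in> R" using assms(4) L(3) by (simp add: ppoint_def psub_def vec.subspace_0)
    moreover have "R' \<inter> L = {0}" using False ppoint_subset_or_skew[OF \<open>ppoint R'\<close> \<open>psub L\<close>] by blast
    ultimately show ?thesis unfolding pjoin_def by (intro vec.span_mono) auto
  qed
  finally show ?thesis .
qed

lemma tangent_hyperplanes:
  fixes \<Omega> \<Gamma> R :: "('a::field, 'n::finite) psubspace" and B :: "('a, 'n) psubspace set"
  defines "Hs \<equiv> (\<lambda>L. pjoin L \<Omega>) ` tangent_lines_at \<Gamma> B R"
  assumes "psub \<Omega>" "pplane \<Gamma>" "skew \<Omega> \<Gamma>" "\<forall>X\<in>B. ppoint X \<and> X \<subseteq> \<Gamma>" "R \<in> B"
  shows "pjoin R \<Omega> \<subseteq> pjoin \<Omega> \<Gamma>" and "pdim (pjoin R \<Omega>) = pdim (pjoin \<Omega> \<Gamma>) - 2"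
    and "card Hs = card (tangent_lines_at \<Gamma> B R)"
    and "\<And>H. H \<in> Hs \<Longrightarrow> psub H \<and> H \<subseteq> pjoin \<Omega> \<Gamma> \<and> pdim H = pdim (pjoin \<Omega> \<Gamma>) - 1 \<and>
           pjoin R \<Omega> \<subseteq> H \<and> (\<forall>Q\<in>cone \<Omega> B. Q \<subseteq> H \<longrightarrow> Q \<subseteq> pjoin R \<Omega>)"
proof -
  have \<Gamma>: "psub \<Gamma>" "pdim \<Gamma> = 2" and "skew \<Gamma> \<Omega>"
    using assms(3,4) by (auto simp: pplane_def skew_def)
  have R: "psub R" "pdim R = 0" "R \<subseteq> \<Gamma>" using assms(5,6) by (auto simp: ppoint_def)
  define T where "T = tangent_lines_at \<Gamma> B R"
  have T: "psub L" "pdim L = 1" "L \<subseteq> \<Gamma>" "R \<subseteq> L" if "L \<in> T" for L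
    using tangent_lines_atD(1,2,4)[of L \<Gamma> B R] that by (simp_all add: T_def pline_def)
  have skew_sub: "skew X \<Omega>" if "psub X" "X \<subseteq> \<Gamma>" for X
    using that \<open>skew \<Gamma> \<Omega>\<close> assms(2) by (auto simp: skew_def psub_def vec.subspace_0)
  have pdim_\<Pi>: "pdim (pjoin \<Omega> \<Gamma>) = pdim \<Omega> + 3"
    using pdim_pjoin_skew[OF assms(2) \<Gamma>(1) assms(4)] \<Gamma>(2) by simp
  have sub_\<Pi>: "pjoin X \<Omega> \<subseteq> pjoin \<Omega> \<Gamma>" if "X \<subseteq> \<Gamma>" for X
    unfolding pjoin_def using that by (intro vec.span_mono) auto
  show "pjoin R \<Omega> \<subseteq> pjoin \<Omega> \<Gamma>" using sub_\<Pi>[OF R(3)] .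
  show "pdim (pjoin R \<Omega>) = pdim (pjoin \<Omega> \<Gamma>) - 2"
    using pdim_pjoin_skew[OF R(1) assms(2) skew_sub[OF R(1,3)]] R(2) pdim_\<Pi> by simp
  show "card Hs = card (tangent_lines_at \<Gamma> B R)"
    unfolding Hs_def T_def[symmetric]
    by (rule card_image, rule inj_on_subset[OF inj_on_pjoin_skew[OF assms(2) \<Gamma>(1) assms(4)]])
      (use T in blast)
  fix H assume "H \<in> Hs"
  then obtain L where L: "L \<in> T" and H: "H = pjoin L \<Omega>" by (auto simp: Hs_def T_def)
  have "pdim H = pdim (pjoin \<Omega> \<Gamma>) - 1"
    using pdim_pjoin_skew[OF T(1)[OF L] assms(2) skew_sub[OF T(1,3)[OF L]]] T(2)[OF L] pdim_\<Pi> H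
    by simp
  moreover have "pjoin R \<Omega> \<subseteq> H"
    unfolding H pjoin_def using T(4)[OF L] by (intro vec.span_mono) auto
  moreover have "\<forall>Q\<in>cone \<Omega> B. Q \<subseteq> H \<longrightarrow> Q \<subseteq> pjoin R \<Omega>"
    using cone_Int_pjoin_tangent[OF assms(2) \<Gamma>(1) assms(4,5)] L H by (simp add: T_def)
  ultimately show "psub H \<and> H \<subseteq> pjoin \<Omega> \<Gamma> \<and> pdim H = pdim (pjoin \<Omega> \<Gamma>) - 1 \<and>
      pjoin R \<Omega> \<subseteq> H \<and> (\<forall>Q\<in>cone \<Omega> B. Q \<subseteq> H \<longrightarrow> Q \<subseteq> pjoin R \<Omega>)"
    using H sub_\<Pi>[OF T(3)[OF L]] by (simp add: psub_def pjoin_def)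
qed

theorem lemma4p3:
  fixes n k t q :: nat
    and \<Omega> \<Gamma> :: "('a::{field,finite}, 'm::finite) psubspace"
    and B :: "('a, 'm) psubspace set"
  assumes "0 < n" "0 < k" "0 < t" "k < n"
    and "CARD('a) = q" "\<exists>p r. prime p \<and> 0 < r \<and> q = p ^ r"
    and "CARD('m) = n * t"
    and "psub \<Omega>" "pdim \<Omega> = int (n * t) - int (k * t) - 2"
    and "pplane \<Gamma>" "skew \<Omega> \<Gamma>"
    and "minimal_blocking_set \<Gamma> B"
    and "\<forall>P\<in>B. card (tangent_lines_at \<Gamma> B P) \<ge> t"
  shows "\<forall>P\<in>cone \<Omega> B. \<exists>\<mu> Hs.
           psub \<mu> \<and> \<mu> \<subseteq> pjoin \<Omega> \<Gamma> \<and> pdim \<mu> = pdim (pjoin \<Omega> \<Gamma>) - 2 \<and>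
           card Hs \<ge> t \<and>
           (\<forall>H\<in>Hs. psub H \<and> H \<subseteq> pjoin \<Omega> \<Gamma> \<and> pdim H = pdim (pjoin \<Omega> \<Gamma>) - 1 \<and>
                    P \<subseteq> H \<and> (\<forall>Q\<in>cone \<Omega> B. Q \<subseteq> H \<longrightarrow> Q \<subseteq> \<mu>))"
proof
  fix P assume "P \<in> cone \<Omega> B"
  then obtain R where "R \<in> B" and P: "P \<subseteq> pjoin R \<Omega>" by (auto simp: cone_def)
  have "\<forall>X\<in>B. ppoint X \<and> X \<subseteq> \<Gamma>"
    using assms(12) by (simp add: minimal_blocking_set_def blocking_set_def)
  note hyperplanes = tangent_hyperplanes[OF assms(8,10,11) this \<open>R \<in> B\<close>]
  define Hs where "Hs = (\<lambda>L. pjoin L \<Omega>) ` tangent_lines_at \<Gamma> B R"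
  have "psub (pjoin R \<Omega>)" by (simp add: psub_def pjoin_def)
  moreover have "card Hs \<ge> t"
    using hyperplanes(3) assms(13) \<open>R \<in> B\<close> by (simp add: Hs_def)
  moreover have "\<forall>H\<in>Hs. psub H \<and> H \<subseteq> pjoin \<Omega> \<Gamma> \<and> pdim H = pdim (pjoin \<Omega> \<Gamma>) - 1 \<and>
      P \<subseteq> H \<and> (\<forall>Q\<in>cone \<Omega> B. Q \<subseteq> H \<longrightarrow> Q \<subseteq> pjoin R \<Omega>)"
    using hyperplanes(4) P unfolding Hs_def by blast
  ultimately show "\<exists>\<mu> Hs. psub \<mu> \<and> \<mu> \<subseteq> pjoin \<Omega> \<Gamma> \<and> pdim \<mu> = pdim (pjoin \<Omega> \<Gamma>) - 2 \<and>
      card Hs \<ge> t \<and> (\<forall>H\<in>Hs. psub H \<and> H \<subseteq> pjoin \<Omega> \<Gamma> \<and> pdim H = pdim (pjoin \<Omega> \<Gamma>) - 1 \<and>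
        P \<subseteq> H \<and> (\<forall>Q\<in>cone \<Omega> B. Q \<subseteq> H \<longrightarrow> Q \<subseteq> \<mu>))"
    using hyperplanes(1,2) by blast
qed

end
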